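(* Let $\zeta_1$ be a positive random variable with $\mathbb{P}(\zeta_1>y)\sim c\,e^{-\gamma y}$ as $y\to\infty$, for constants $c,\gamma>0$, let $\lambda>0$, and let $\tilde X_1$ be a random variable which, conditionally on $\zeta_1$, is geometric on $\{1,2,\dots\}$ with parameter $e^{-\lambda\zeta_1}$. Set $a=\gamma/\lambda$. Then $$\mathbb{P}(\tilde X_1>k)\sim c\,\Gamma(1+a)\,k^{-a}\qquad\text{as }k\to\infty.$$
   Context: A geometric random variable $G$ on $\{1,2,\dots\}$ with parameter $p$ satisfies $\mathbb{P}(G>k)=(1-p)^k$. $f\sim g$ means $f/g\to1$. *)

theory Defs
  imports "HOL-Probability.Probability" "HOL-Library.Landau_Symbols"
begin

end

theory Submission imports Defs begin

(* With U = exp (- lam * zeta), the hypothesis gives P(X > k) = E (1 - U)^k, and Fubini turns this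
   into the kernel transform int_0^1 k (1 - u)^(k - 1) H u du of H u = P(U < u). The exponential
   tail of zeta says H u ~ c u^a as u -> 0, with a = gamma / lam. Since the kernel has moments
   int_0^1 u^b k (1 - u)^(k - 1) du = k B(b + 1, k) ~ Gamma(b + 1) k^(-b), replacing H by c u^a
   costs at most eps u^a near 0 plus a multiple of u^(a + 1) elsewhere, and the latter only
   contributes O(k^(-a - 1)). *)

lemma has_integral_kernel_powr:
  fixes b :: real and k :: nat
  assumes "b \<ge> 0" and "k \<ge> 1"
  shows "((\<lambda>u. real k * (1 - u) ^ (k - 1) * u powr b) has_integral real k * Beta (b + 1) (real k)) {0..1}"
proof -
  have Beta: "((\<lambda>u. real k * (u powr (b + 1 - 1) * (1 - u) powr (real k - 1)))
          has_integral real k * Beta (b + 1) (real k)) {0..1}"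
    using assms by (intro has_integral_mult_right has_integral_Beta_real) auto
  show ?thesis
  proof (rule has_integral_spike_finite[OF _ _ Beta])
    fix u assume "u \<in> {0..1} - {1::real}"
    then have "(1 - u) powr (real k - 1) = (1 - u) ^ (k - 1)"
      using \<open>k \<ge> 1\<close> by (simp add: powr_realpow[symmetric] of_nat_diff)
    then show "real k * (1 - u) ^ (k - 1) * u powr b = real k * (u powr (b + 1 - 1) * (1 - u) powr (real k - 1))"
      by simp
  qed simp
qed

lemma tendsto_kernel_Beta:
  fixes b :: real
  assumes "b > 0"
  shows "(\<lambda>k. real k powr b * (real k * Beta (b + 1) (real k))) \<longlonglongrightarrow> Gamma (b + 1)"
proof -
  have b: "b \<notin> \<int>\<^sub>\<le>\<^sub>0" using assms by (auto elim!: nonpos_Ints_cases)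
  have Gb: "Gamma b > 0" using assms by (rule Gamma_real_pos)
  have "(\<lambda>k. Gamma (b + 1) / Gamma b * Gamma_series b k) \<longlonglongrightarrow> Gamma (b + 1) / Gamma b * Gamma b"
    by (intro tendsto_intros)
  then have lim: "(\<lambda>k. Gamma (b + 1) / Gamma b * Gamma_series b k) \<longlonglongrightarrow> Gamma (b + 1)"
    using Gb by simp
  have "Gamma (b + 1) / Gamma b * Gamma_series b k = real k powr b * (real k * Beta (b + 1) (real k))"
    if "k > 0" for k
  proof -
    have "pochhammer b (k + 1) = Gamma (b + real k + 1) / Gamma b"
      using pochhammer_Gamma[OF b, of "k + 1"] by (simp add: add_ac)
    moreover have "real k * Gamma (real k) = fact k"
    proof -
      obtain m where "k = Suc m" using \<open>k > 0\<close> by (cases k) auto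
      then show ?thesis using Gamma_fact[of m] by (simp add: fact_Suc add_ac)
    qed
    ultimately show ?thesis
      using that Gb unfolding Gamma_series_def Beta_def
      by (simp add: powr_def field_simps add_ac)
  qed
  then show ?thesis
    by (intro Lim_transform_eventually[OF lim] eventually_mono[OF eventually_gt_at_top[of 0]])
qed

lemma tendsto_kernel_Beta_higher:
  fixes a :: real
  assumes "a > 0"
  shows "(\<lambda>k. real k powr a * (real k * Beta (a + 2) (real k))) \<longlonglongrightarrow> 0"
proof -
  have "real k * Beta (a + 2) (real k) = (a + 1) / (a + real k + 1) * (real k * Beta (a + 1) (real k))" for k
  proof -
    have "a + 1 \<notin> \<int>\<^sub>\<le>\<^sub>0" using assms by (auto elim!: nonpos_Ints_cases)
    from Beta_plus1_left[OF this, of "real k"] assms show ?thesis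
      by (simp add: field_simps add_ac)
  qed
  moreover have "(\<lambda>k. (a + 1) / (a + real k + 1) * (real k powr a * (real k * Beta (a + 1) (real k))))
                   \<longlonglongrightarrow> 0 * Gamma (a + 1)"
    using assms by (intro tendsto_mult tendsto_kernel_Beta) real_asymp+
  ultimately show ?thesis by (simp add: algebra_simps)
qed

lemma has_integral_abs_diff_le:
  fixes f g e :: "'a::euclidean_space \<Rightarrow> real"
  assumes "(f has_integral I) S" and "(g has_integral J) S" and "(e has_integral E) S"
    and "\<And>x. x \<in> S \<Longrightarrow> \<bar>f x - g x\<bar> \<le> e x"
  shows "\<bar>I - J\<bar> \<le> E"
proof -
  have diff: "((\<lambda>x. f x - g x) has_integral I - J) S"
    using assms(1,2) by (rule has_integral_diff)
  have "I - J \<le> E"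
    using diff assms(3) by (rule has_integral_le) (use assms(4) in fastforce)
  moreover have "- E \<le> I - J"
    using has_integral_neg[OF assms(3)] diff by (rule has_integral_le) (use assms(4) in fastforce)
  ultimately show ?thesis by linarith
qed

lemma abs_diff_powr_le_envelope:
  fixes H :: "real \<Rightarrow> real"
  assumes "a \<ge> 0" and "0 < \<delta>" and "\<epsilon> \<ge> 0"
    and near0: "\<And>u. 0 < u \<Longrightarrow> u \<le> \<delta> \<Longrightarrow> \<bar>H u - c * u powr a\<bar> \<le> \<epsilon> * u powr a"
    and "\<bar>H u\<bar> \<le> 1" and "H 0 = 0" and "u \<in> {0..1}"
  shows "\<bar>H u - c * u powr a\<bar> \<le> \<epsilon> * u powr a + (1 + \<bar>c\<bar>) / \<delta> powr (a + 1) * u powr (a + 1)"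
proof -
  consider "u = 0" | "0 < u" "u \<le> \<delta>" | "\<delta> < u" using \<open>u \<in> {0..1}\<close> by force
  then show ?thesis
  proof cases
    case 2
    then show ?thesis using near0[of u] \<open>0 < \<delta>\<close> by (simp add: add_increasing2)
  next
    case 3
    have "\<bar>H u - c * u powr a\<bar> \<le> 1 + \<bar>c\<bar> * u powr a"
      using \<open>\<bar>H u\<bar> \<le> 1\<close> abs_triangle_ineq4[of "H u" "c * u powr a"] by (simp add: abs_mult)
    also have "\<dots> \<le> (1 + \<bar>c\<bar>) * 1"
      using \<open>u \<in> {0..1}\<close> \<open>a \<ge> 0\<close> by (simp add: mult_left_le powr_le1)
    also have "\<dots> \<le> (1 + \<bar>c\<bar>) * (u / \<delta>) powr (a + 1)"
      using 3 \<open>0 < \<delta>\<close> \<open>a \<ge> 0\<close> by (intro mult_left_mono ge_one_powr_ge_zero) auto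
    also have "\<dots> = (1 + \<bar>c\<bar>) / \<delta> powr (a + 1) * u powr (a + 1)"
      using 3 \<open>0 < \<delta>\<close> by (simp add: powr_divide)
    finally show ?thesis using \<open>\<epsilon> \<ge> 0\<close> by (simp add: add_increasing)
  qed (use \<open>H 0 = 0\<close> in simp)
qed

lemma kernel_transform_error_bound:
  fixes H :: "real \<Rightarrow> real" and k :: nat
  assumes "a \<ge> 0" and "0 < \<delta>" and "\<epsilon> \<ge> 0"
    and near0: "\<And>u. 0 < u \<Longrightarrow> u \<le> \<delta> \<Longrightarrow> \<bar>H u - c * u powr a\<bar> \<le> \<epsilon> * u powr a"
    and bounded: "\<And>u. u \<in> {0..1} \<Longrightarrow> \<bar>H u\<bar> \<le> 1" and "H 0 = 0"
    and "k \<ge> 1" and S: "((\<lambda>u. real k * (1 - u) ^ (k - 1) * H u) has_integral S) {0..1}"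
  shows "\<bar>S - c * (real k * Beta (a + 1) (real k))\<bar>
           \<le> \<epsilon> * (real k * Beta (a + 1) (real k)) + (1 + \<bar>c\<bar>) / \<delta> powr (a + 1) * (real k * Beta (a + 2) (real k))"
proof (rule has_integral_abs_diff_le[OF S])
  define B where "B = (1 + \<bar>c\<bar>) / \<delta> powr (a + 1)"
  show "((\<lambda>u. c * (real k * (1 - u) ^ (k - 1) * u powr a)) has_integral c * (real k * Beta (a + 1) (real k))) {0..1}"
    using has_integral_kernel_powr[OF \<open>a \<ge> 0\<close> \<open>k \<ge> 1\<close>] by (rule has_integral_mult_right)
  show "((\<lambda>u. \<epsilon> * (real k * (1 - u) ^ (k - 1) * u powr a) + B * (real k * (1 - u) ^ (k - 1) * u powr (a + 1)))
          has_integral \<epsilon> * (real k * Beta (a + 1) (real k)) + B * (real k * Beta (a + 2) (real k))) {0..1}"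
    using has_integral_kernel_powr[of a k] has_integral_kernel_powr[of "a + 1" k] \<open>a \<ge> 0\<close> \<open>k \<ge> 1\<close>
    by (intro has_integral_add has_integral_mult_right) (simp_all add: add.assoc)
  fix u :: real assume u: "u \<in> {0..1}"
  have "\<bar>H u - c * u powr a\<bar> \<le> \<epsilon> * u powr a + B * u powr (a + 1)"
    unfolding B_def using assms(1-3) near0 bounded[OF u] \<open>H 0 = 0\<close> u
    by (rule abs_diff_powr_le_envelope)
  moreover have w: "real k * (1 - u) ^ (k - 1) \<ge> 0" using u by simp
  ultimately have "real k * (1 - u) ^ (k - 1) * \<bar>H u - c * u powr a\<bar>
                     \<le> real k * (1 - u) ^ (k - 1) * (\<epsilon> * u powr a + B * u powr (a + 1))"
    by (rule mult_left_mono)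
  moreover have "\<bar>real k * (1 - u) ^ (k - 1) * H u - c * (real k * (1 - u) ^ (k - 1) * u powr a)\<bar>
                   = real k * (1 - u) ^ (k - 1) * \<bar>H u - c * u powr a\<bar>"
  proof -
    have "real k * (1 - u) ^ (k - 1) * H u - c * (real k * (1 - u) ^ (k - 1) * u powr a)
            = real k * (1 - u) ^ (k - 1) * (H u - c * u powr a)"
      by (simp add: algebra_simps)
    then show ?thesis using w by (metis abs_mult abs_of_nonneg)
  qed
  ultimately show "\<bar>real k * (1 - u) ^ (k - 1) * H u - c * (real k * (1 - u) ^ (k - 1) * u powr a)\<bar>
               \<le> \<epsilon> * (real k * (1 - u) ^ (k - 1) * u powr a) + B * (real k * (1 - u) ^ (k - 1) * u powr (a + 1))"
    by (simp add: algebra_simps)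
qed

lemma powr_ratio_limit_local_bound:
  fixes H :: "real \<Rightarrow> real"
  assumes "((\<lambda>u. H u / u powr a) \<longlongrightarrow> c) (at_right 0)" and "\<epsilon> > 0"
  shows "\<exists>\<delta>>0. \<forall>u. 0 < u \<and> u \<le> \<delta> \<longrightarrow> \<bar>H u - c * u powr a\<bar> \<le> \<epsilon> * u powr a"
proof -
  obtain b where "b > 0" and b: "\<And>u. 0 < u \<Longrightarrow> u < b \<Longrightarrow> \<bar>H u / u powr a - c\<bar> < \<epsilon>"
    using tendstoD[OF assms] by (auto simp: eventually_at_right_field dist_real_def)
  have "\<bar>H u - c * u powr a\<bar> \<le> \<epsilon> * u powr a" if "0 < u" "u \<le> b / 2" for u
  proof -
    have "\<bar>H u - c * u powr a\<bar> = \<bar>H u / u powr a - c\<bar> * u powr a"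
      using \<open>0 < u\<close> by (simp add: abs_mult_pos left_diff_distrib)
    also have "\<dots> \<le> \<epsilon> * u powr a"
      using b[of u] that \<open>b > 0\<close> by (intro mult_right_mono) auto
    finally show ?thesis .
  qed
  with \<open>b > 0\<close> show ?thesis by (intro exI[of _ "b / 2"]) auto
qed

lemma kernel_transform_asymptotic:
  fixes S :: "nat \<Rightarrow> real" and H :: "real \<Rightarrow> real"
  assumes "a > 0"
    and S: "\<And>k. k \<ge> 1 \<Longrightarrow> ((\<lambda>u. real k * (1 - u) ^ (k - 1) * H u) has_integral S k) {0..1}"
    and bounded: "\<And>u. u \<in> {0..1} \<Longrightarrow> \<bar>H u\<bar> \<le> 1" and "H 0 = 0"
    and H: "((\<lambda>u. H u / u powr a) \<longlongrightarrow> c) (at_right 0)"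
  shows "(\<lambda>k. real k powr a * S k) \<longlonglongrightarrow> c * Gamma (a + 1)"
proof -
  define M where "M b k = real k powr a * (real k * Beta (b + 1) (real k))" for b k
  have M: "M a \<longlonglongrightarrow> Gamma (a + 1)"
    unfolding M_def using \<open>a > 0\<close> by (rule tendsto_kernel_Beta)
  have M_higher: "M (a + 1) \<longlonglongrightarrow> 0"
    unfolding M_def using tendsto_kernel_Beta_higher[OF \<open>a > 0\<close>] by (simp add: add.assoc)
  have "Gamma (a + 1) > 0" using \<open>a > 0\<close> by (simp add: Gamma_real_pos)
  have "(\<lambda>k. real k powr a * S k - c * M a k) \<longlonglongrightarrow> 0"
  proof (rule tendstoI)
    fix e :: real assume "e > 0"
    define \<epsilon> where "\<epsilon> = e / (2 * Gamma (a + 1))"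
    have "\<epsilon> > 0" using \<open>e > 0\<close> \<open>Gamma (a + 1) > 0\<close> by (simp add: \<epsilon>_def)
    obtain \<delta> where "\<delta> > 0"
      and near0: "\<And>u. 0 < u \<Longrightarrow> u \<le> \<delta> \<Longrightarrow> \<bar>H u - c * u powr a\<bar> \<le> \<epsilon> * u powr a"
      using powr_ratio_limit_local_bound[OF H \<open>\<epsilon> > 0\<close>] by blast
    define B where "B = (1 + \<bar>c\<bar>) / \<delta> powr (a + 1)"
    have "(\<lambda>k. \<epsilon> * M a k + B * M (a + 1) k) \<longlonglongrightarrow> \<epsilon> * Gamma (a + 1) + B * 0"
      by (intro tendsto_intros M M_higher)
    moreover have "\<epsilon> * Gamma (a + 1) + B * 0 < e"
      using \<open>e > 0\<close> \<open>Gamma (a + 1) > 0\<close> by (simp add: \<epsilon>_def)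
    ultimately have "eventually (\<lambda>k. \<epsilon> * M a k + B * M (a + 1) k < e) sequentially"
      by (rule order_tendstoD)
    then show "eventually (\<lambda>k. dist (real k powr a * S k - c * M a k) 0 < e) sequentially"
      using eventually_ge_at_top[of 1]
    proof eventually_elim
      case (elim k)
      have "\<bar>S k - c * (real k * Beta (a + 1) (real k))\<bar>
              \<le> \<epsilon> * (real k * Beta (a + 1) (real k)) + B * (real k * Beta (a + 2) (real k))"
        unfolding B_def using \<open>a > 0\<close> \<open>\<delta> > 0\<close> \<open>\<epsilon> > 0\<close> near0 bounded \<open>H 0 = 0\<close> elim(2) S[OF elim(2)]
        by (intro kernel_transform_error_bound) auto
      then have "real k powr a * \<bar>S k - c * (real k * Beta (a + 1) (real k))\<bar>
                   \<le> \<epsilon> * M a k + B * M (a + 1) k"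
        unfolding M_def by (auto simp: add.assoc algebra_simps intro: mult_left_mono[THEN order_trans])
      moreover have "real k powr a * S k - c * M a k = real k powr a * (S k - c * (real k * Beta (a + 1) (real k)))"
        by (simp add: M_def algebra_simps)
      ultimately show ?case
        using elim(1) by (simp add: dist_real_def abs_mult)
    qed
  qed
  from tendsto_add[OF this tendsto_mult_left[OF M, of c]] show ?thesis by simp
qed

lemma nn_integral_kernel_above:
  fixes v :: real and k :: nat
  assumes "v \<in> {0..1}" and "k \<ge> 1"
  shows "(\<integral>\<^sup>+u. ennreal (indicator {0..1} u * (real k * (1 - u) ^ (k - 1)) * (if v < u then 1 else 0)) \<partial>lborel)
           = ennreal ((1 - v) ^ k)"
proof -
  have "((\<lambda>u. -((1 - u) ^ k)) has_real_derivative real k * (1 - u) ^ (k - 1)) (at u within {v..1})" for u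
    by (rule derivative_eq_intros refl | simp)+
  then have "((\<lambda>u. real k * (1 - u) ^ (k - 1)) has_integral (- ((1 - 1) ^ k) - - ((1 - v) ^ k))) {v..1}"
    using assms by (intro fundamental_theorem_of_calculus) (auto simp: has_real_derivative_iff_has_vector_derivative)
  then have "((\<lambda>u. real k * (1 - u) ^ (k - 1)) has_integral (1 - v) ^ k) {v..1}"
    using \<open>k \<ge> 1\<close> by (simp add: power_0_left)
  then have "(\<integral>\<^sup>+u. ennreal (indicator {v..1} u * (real k * (1 - u) ^ (k - 1))) \<partial>lborel) = ennreal ((1 - v) ^ k)"
    by (rule nn_integral_has_integral_lebesgue[rotated]) auto
  moreover have "(\<integral>\<^sup>+u. ennreal (indicator {0..1} u * (real k * (1 - u) ^ (k - 1)) * (if v < u then 1 else 0)) \<partial>lborel)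
                   = (\<integral>\<^sup>+u. ennreal (indicator {v..1} u * (real k * (1 - u) ^ (k - 1))) \<partial>lborel)"
  proof (rule nn_integral_cong_AE)
    show "AE u in lborel. ennreal (indicator {0..1} u * (real k * (1 - u) ^ (k - 1)) * (if v < u then 1 else 0))
                           = ennreal (indicator {v..1} u * (real k * (1 - u) ^ (k - 1)))"
      using AE_lborel_singleton[of v] by eventually_elim (use assms in \<open>auto simp: indicator_def\<close>)
  qed
  ultimately show ?thesis by simp
qed

lemma (in prob_space) expectation_power_eq_nn_integral_kernel:
  fixes U :: "'a \<Rightarrow> real" and k :: nat
  assumes U: "random_variable borel U"
    and U01: "\<And>\<omega>. \<omega> \<in> space M \<Longrightarrow> U \<omega> \<in> {0..1}" and "k \<ge> 1"
  shows "ennreal (expectation (\<lambda>\<omega>. (1 - U \<omega>) ^ k))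
           = (\<integral>\<^sup>+u. ennreal (indicator {0..1} u * (real k * (1 - u) ^ (k - 1)) * prob {\<omega>\<in>space M. U \<omega> < u}) \<partial>lborel)"
proof -
  interpret pair_sigma_finite M lborel
    by (simp add: pair_sigma_finite_def lborel.sigma_finite_measure_axioms sigma_finite_measure_axioms)
  define w where "w u = indicator {0..1} u * (real k * (1 - u) ^ (k - 1))" for u :: real
  have w: "w u \<ge> 0" for u by (auto simp: w_def indicator_def)
  have "integrable M (\<lambda>\<omega>. (1 - U \<omega>) ^ k)"
    using U U01 by (intro integrable_const_bound[where B = 1]) (auto simp: power_le_one)
  then have "ennreal (expectation (\<lambda>\<omega>. (1 - U \<omega>) ^ k)) = (\<integral>\<^sup>+\<omega>. ennreal ((1 - U \<omega>) ^ k) \<partial>M)"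
    using U01 by (intro nn_integral_eq_integral[symmetric] AE_I2) auto
  also have "\<dots> = (\<integral>\<^sup>+\<omega>. (\<integral>\<^sup>+u. ennreal (w u * (if U \<omega> < u then 1 else 0)) \<partial>lborel) \<partial>M)"
    unfolding w_def using U01 \<open>k \<ge> 1\<close>
    by (intro nn_integral_cong nn_integral_kernel_above[symmetric]) auto
  also have "\<dots> = (\<integral>\<^sup>+u. (\<integral>\<^sup>+\<omega>. ennreal (w u * (if U \<omega> < u then 1 else 0)) \<partial>M) \<partial>lborel)"
    by (rule Fubini'[symmetric]) (unfold w_def, use U in measurable)
  also have "\<dots> = (\<integral>\<^sup>+u. (\<integral>\<^sup>+\<omega>. ennreal (w u) * indicator {\<omega>\<in>space M. U \<omega> < u} \<omega> \<partial>M) \<partial>lborel)"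
    by (intro nn_integral_cong) (simp add: indicator_def)
  also have "\<dots> = (\<integral>\<^sup>+u. ennreal (w u * prob {\<omega>\<in>space M. U \<omega> < u}) \<partial>lborel)"
    using U by (intro nn_integral_cong) (simp add: nn_integral_cmult_indicator emeasure_eq_measure ennreal_mult w)
  finally show ?thesis unfolding w_def .
qed

lemma (in prob_space) expectation_power_has_kernel_integral:
  fixes U :: "'a \<Rightarrow> real" and k :: nat
  assumes U: "random_variable borel U"
    and U01: "\<And>\<omega>. \<omega> \<in> space M \<Longrightarrow> U \<omega> \<in> {0..1}" and "k \<ge> 1"
  shows "((\<lambda>u. real k * (1 - u) ^ (k - 1) * prob {\<omega>\<in>space M. U \<omega> < u})
           has_integral expectation (\<lambda>\<omega>. (1 - U \<omega>) ^ k)) {0..1}"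
proof -
  define H where "H u = prob {\<omega>\<in>space M. U \<omega> < u}" for u
  have "mono H"
    unfolding H_def by (intro monoI finite_measure_mono) (use U in auto)
  have "((\<lambda>u. indicator {0..1} u * (real k * (1 - u) ^ (k - 1)) * H u)
          has_integral expectation (\<lambda>\<omega>. (1 - U \<omega>) ^ k)) UNIV"
  proof (rule nn_integral_has_integral)
    have "H \<in> borel_measurable borel" using \<open>mono H\<close> by (rule borel_measurable_mono)
    then show "(\<lambda>u. indicator {0..1} u * (real k * (1 - u) ^ (k - 1)) * H u) \<in> borel_measurable borel"
      by measurable
    show "0 \<le> indicator {0..1} u * (real k * (1 - u) ^ (k - 1)) * H u" for u
      by (auto simp: H_def indicator_def)
    show "(\<integral>\<^sup>+u. ennreal (indicator {0..1} u * (real k * (1 - u) ^ (k - 1)) * H u) \<partial>lborel)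
            = ennreal (expectation (\<lambda>\<omega>. (1 - U \<omega>) ^ k))"
      unfolding H_def using expectation_power_eq_nn_integral_kernel[OF U U01 \<open>k \<ge> 1\<close>] by simp
    show "0 \<le> expectation (\<lambda>\<omega>. (1 - U \<omega>) ^ k)"
      using U01 by (intro integral_nonneg_AE AE_I2) auto
  qed
  moreover have "(\<lambda>u. indicator {0..1} u * (real k * (1 - u) ^ (k - 1)) * H u)
                   = (\<lambda>u. if u \<in> {0..1} then real k * (1 - u) ^ (k - 1) * H u else 0)"
    by (auto simp: indicator_def)
  ultimately have "((\<lambda>u. if u \<in> {0..1} then real k * (1 - u) ^ (k - 1) * H u else 0)
                     has_integral expectation (\<lambda>\<omega>. (1 - U \<omega>) ^ k)) UNIV"
    by (simp only:)
  then show ?thesis unfolding has_integral_restrict_UNIV H_def .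
qed

lemma tendsto_exp_tail_at_right_0:
  fixes F :: "real \<Rightarrow> real"
  assumes F: "F \<sim>[at_top] (\<lambda>y. c * exp (- \<gamma> * y))" and "c \<noteq> 0" and "lam > 0"
  shows "((\<lambda>u. F (- ln u / lam) / u powr (\<gamma> / lam)) \<longlongrightarrow> c) (at_right 0)"
proof -
  have "((\<lambda>y. c * (F y / (c * exp (- \<gamma> * y)))) \<longlongrightarrow> c * 1) at_top"
    using F \<open>c \<noteq> 0\<close> by (intro tendsto_mult_left asymp_equivD_strong) auto
  then have "((\<lambda>y. F y * exp (\<gamma> * y)) \<longlongrightarrow> c) at_top"
    using \<open>c \<noteq> 0\<close> by (simp add: exp_minus field_simps)
  moreover have "filterlim (\<lambda>u. - ln u / lam) at_top (at_right 0)"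
    using \<open>lam > 0\<close> by real_asymp
  ultimately have "((\<lambda>u. F (- ln u / lam) * exp (\<gamma> * (- ln u / lam))) \<longlongrightarrow> c) (at_right 0)"
    by (rule filterlim_compose)
  moreover have "\<forall>\<^sub>F u in at_right 0. F (- ln u / lam) * exp (\<gamma> * (- ln u / lam)) = F (- ln u / lam) / u powr (\<gamma> / lam)"
    using eventually_at_right_less by eventually_elim (simp add: powr_def exp_minus field_simps)
  ultimately show ?thesis by (rule Lim_transform_eventually)
qed

lemma asymp_equiv_powr_of_tendsto:
  fixes S :: "nat \<Rightarrow> real"
  assumes "(\<lambda>k. real k powr a * S k) \<longlonglongrightarrow> L" and "L \<noteq> 0"
  shows "S \<sim>[at_top] (\<lambda>k. L * real k powr (- a))"
proof (rule asymp_equivI'_const[OF _ \<open>L \<noteq> 0\<close>])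
  show "(\<lambda>k. S k / real k powr (- a)) \<longlonglongrightarrow> L"
    using assms(1) by (simp add: powr_minus divide_inverse mult.commute)
qed

lemma (in prob_space) tendsto_prob_exp_neg_less_at_right_0:
  fixes \<zeta> :: "'a \<Rightarrow> real"
  assumes "lam > 0" and "c \<noteq> 0"
    and tail: "(\<lambda>y. prob {\<omega>\<in>space M. \<zeta> \<omega> > y}) \<sim>[at_top] (\<lambda>y. c * exp (- \<gamma> * y))"
  shows "((\<lambda>u. prob {\<omega>\<in>space M. exp (- lam * \<zeta> \<omega>) < u} / u powr (\<gamma> / lam)) \<longlongrightarrow> c) (at_right 0)"
proof -
  have lim: "((\<lambda>u. prob {\<omega>\<in>space M. \<zeta> \<omega> > - ln u / lam} / u powr (\<gamma> / lam)) \<longlongrightarrow> c) (at_right 0)"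
    by (rule tendsto_exp_tail_at_right_0[OF tail \<open>c \<noteq> 0\<close> \<open>lam > 0\<close>])
  have eq: "prob {\<omega>\<in>space M. \<zeta> \<omega> > - ln u / lam} = prob {\<omega>\<in>space M. exp (- lam * \<zeta> \<omega>) < u}"
    if "u > 0" for u
  proof -
    have "exp (- lam * \<zeta> \<omega>) < u \<longleftrightarrow> \<zeta> \<omega> > - ln u / lam" for \<omega>
    proof -
      have "exp (- lam * \<zeta> \<omega>) < u \<longleftrightarrow> - lam * \<zeta> \<omega> < ln u"
        using \<open>u > 0\<close> by (metis exp_less_cancel_iff exp_ln)
      also have "\<dots> \<longleftrightarrow> \<zeta> \<omega> > - ln u / lam"
        using \<open>lam > 0\<close> by (auto simp: field_simps)
      finally show ?thesis .
    qed
    then show ?thesis by simp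
  qed
  show ?thesis
    using lim by (rule Lim_transform_eventually) (use eventually_at_right_less in \<open>eventually_elim, simp only: eq\<close>)
qed

theorem lemma4p3:
  fixes M :: "'a measure" and \<zeta> :: "'a \<Rightarrow> real" and X :: "'a \<Rightarrow> nat"
    and c \<gamma> lam :: real
  assumes "prob_space M"
    and "\<zeta> \<in> borel_measurable M"
    and "X \<in> measurable M (count_space UNIV)"
    and "\<forall>\<omega>\<in>space M. \<zeta> \<omega> > 0"
    and "c > 0" and "\<gamma> > 0" and "lam > 0"
    and "(\<lambda>y. measure M {\<omega>\<in>space M. \<zeta> \<omega> > y}) \<sim>[at_top] (\<lambda>y. c * exp (- \<gamma> * y))"
    and "\<forall>k::nat. \<forall>B\<in>sets borel.
           measure M {\<omega>\<in>space M. X \<omega> > k \<and> \<zeta> \<omega> \<in> B}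
           = (\<integral>\<omega>. indicator {\<omega>\<in>space M. \<zeta> \<omega> \<in> B} \<omega> * (1 - exp (- lam * \<zeta> \<omega>)) ^ k \<partial>M)"
  shows "(\<lambda>k::nat. measure M {\<omega>\<in>space M. X \<omega> > k})
           \<sim>[at_top] (\<lambda>k. c * Gamma (1 + \<gamma> / lam) * real k powr (- (\<gamma> / lam)))"
proof -
  interpret prob_space M by fact
  define U where "U \<omega> = exp (- lam * \<zeta> \<omega>)" for \<omega>
  define H where "H u = prob {\<omega>\<in>space M. U \<omega> < u}" for u
  have U: "U \<in> borel_measurable M" unfolding U_def using assms(2) by measurable
  have U01: "U \<omega> \<in> {0..1}" if "\<omega> \<in> space M" for \<omega>
    using assms(4,7) that by (simp add: U_def less_imp_le)
  have "prob {\<omega>\<in>space M. X \<omega> > k} = (\<integral>\<omega>. (1 - U \<omega>) ^ k \<partial>M)" for k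
    using assms(9)[rule_format, of UNIV k] by (simp add: U_def cong: Bochner_Integration.integral_cong)
  then have S: "((\<lambda>u. real k * (1 - u) ^ (k - 1) * H u) has_integral prob {\<omega>\<in>space M. X \<omega> > k}) {0..1}"
    if "k \<ge> 1" for k
    unfolding H_def using expectation_power_has_kernel_integral[OF U U01 that] by simp
  have "{\<omega>\<in>space M. U \<omega> < 0} = {}" using U01 by force
  then have "H 0 = 0" unfolding H_def by (simp only:) simp
  moreover have "((\<lambda>u. H u / u powr (\<gamma> / lam)) \<longlongrightarrow> c) (at_right 0)"
    unfolding H_def U_def using assms(5,7,8) by (intro tendsto_prob_exp_neg_less_at_right_0) auto
  ultimately have "(\<lambda>k. real k powr (\<gamma> / lam) * prob {\<omega>\<in>space M. X \<omega> > k}) \<longlonglongrightarrow> c * Gamma (\<gamma> / lam + 1)"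
    using assms(6,7) S by (intro kernel_transform_asymptotic) (auto simp: H_def)
  moreover have "Gamma (\<gamma> / lam + 1) > 0" using assms(6,7) by (intro Gamma_real_pos add_pos_pos) auto
  then have "c * Gamma (\<gamma> / lam + 1) \<noteq> 0" using \<open>c > 0\<close> by simp
  ultimately show ?thesis
    using asymp_equiv_powr_of_tendsto[of "\<gamma> / lam"] by (simp add: add.commute)
qed

end
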